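(* For every $n$ and every $D\le n^{1/4}$, there exists an unweighted directed graph $G$ with $\Theta(n)$ vertices and diameter $D$ such that every subgraph $H$ of $G$ on the same vertex set with $\mathrm{diam}(H)<1.5\,\mathrm{diam}(G)-1$ contains $\Omega(n^{1.5})$ edges.
   Context: $\mathrm{diam}(G)=\max_{u,v}d_G(u,v)$ where $d_G(u,v)$ is the directed shortest-path distance. A subgraph of $G=(V,E)$ is a graph $(V,E')$ with $E'\subseteq E$. *)

theory Defs
  imports Main "HOL-Library.Extended_Nat"
begin

definition digraph :: "'a set \<Rightarrow> ('a \<times> 'a) set \<Rightarrow> bool" where
  "digraph V E \<longleftrightarrow> finite V \<and> E \<subseteq> V \<times> V"

definition ddist :: "('a \<times> 'a) set \<Rightarrow> 'a \<Rightarrow> 'a \<Rightarrow> enat" where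
  "ddist E u v = (if \<exists>k. (u, v) \<in> E ^^ k then enat (LEAST k. (u, v) \<in> E ^^ k) else \<infinity>)"

definition diam :: "'a set \<Rightarrow> ('a \<times> 'a) set \<Rightarrow> enat" where
  "diam V E = (SUP u\<in>V. SUP v\<in>V. ddist E u v)"

end

theory Submission
  imports Defs "HOL-Library.Countable" Complex_Main
begin

text \<open>Write \<open>D = a + b + 1\<close> with \<open>a \<le> b \<le> a + 1\<close>. Take \<open>m\<close> disjoint source paths of
length \<open>a\<close> and \<open>m\<close> disjoint sink paths of length \<open>b\<close>, join the end of every source path to the
start of every sink path, and add a hub path of \<open>a\<close> vertices that is reached quickly from
everywhere and reaches everything quickly. This digraph has diameter \<open>D\<close> and \<open>\<Theta>(m D)\<close>
vertices. If a subgraph drops the arc from source path \<open>i\<close> to sink path \<open>j\<close>, a potential that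
grows by at most one per arc shows that the start of path \<open>i\<close> is at distance at least
\<open>2a + b + 1 \<ge> 3D/2 - 1\<close> from the end of path \<open>j\<close>. Hence every subgraph of diameter below
\<open>3D/2 - 1\<close> keeps all \<open>m\<^sup>2\<close> bipartite arcs, which is of order \<open>n powr (3/2)\<close> for \<open>m \<approx> n / D\<close> and
\<open>D \<le> n powr (1/4)\<close>. For \<open>D \<le> 2\<close> no subgraph has smaller diameter, so the claim is vacuous.\<close>

lemma ddist_le_enat_iff: "ddist E u v \<le> enat k \<longleftrightarrow> (\<exists>j\<le>k. (u, v) \<in> E ^^ j)"
proof
  assume "ddist E u v \<le> enat k"
  then have walk: "\<exists>j. (u, v) \<in> E ^^ j" and "(LEAST j. (u, v) \<in> E ^^ j) \<le> k"
    by (auto simp: ddist_def split: if_splits)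
  with LeastI_ex[OF walk] show "\<exists>j\<le>k. (u, v) \<in> E ^^ j" by blast
next
  assume "\<exists>j\<le>k. (u, v) \<in> E ^^ j"
  then show "ddist E u v \<le> enat k"
    unfolding ddist_def by (auto intro: Least_le order_trans)
qed

lemma enat_le_ddist_iff: "enat k \<le> ddist E u v \<longleftrightarrow> (\<forall>j<k. (u, v) \<notin> E ^^ j)"
proof -
  have "enat k \<le> ddist E u v \<longleftrightarrow> \<not> (\<exists>j. j < k \<and> ddist E u v \<le> enat j)"
    by (cases "ddist E u v") (auto, meson not_le order_refl)
  also have "\<dots> \<longleftrightarrow> (\<forall>j<k. (u, v) \<notin> E ^^ j)"
    by (auto simp: ddist_le_enat_iff)
  finally show ?thesis .
qed

lemma ddist_self: "ddist E u u = 0"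
proof -
  have "ddist E u u \<le> enat 0"
    by (auto simp: ddist_le_enat_iff)
  then show ?thesis
    by (metis zero_enat_def le_zero_eq)
qed

lemma ddist_arc: "(u, v) \<in> E \<Longrightarrow> ddist E u v \<le> enat 1"
  by (auto simp: ddist_le_enat_iff intro: exI[of _ 1])

lemma ddist_trans_le:
  assumes "ddist E u v \<le> enat p" "ddist E v w \<le> enat q" "p + q \<le> r"
  shows "ddist E u w \<le> enat r"
proof -
  obtain i j where "i \<le> p" "(u, v) \<in> E ^^ i" "j \<le> q" "(v, w) \<in> E ^^ j"
    using assms(1,2) by (auto simp: ddist_le_enat_iff)
  from \<open>(u, v) \<in> E ^^ i\<close> \<open>(v, w) \<in> E ^^ j\<close> have "(u, w) \<in> E ^^ (i + j)"
    by (rule relpow_trans)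
  moreover have "i + j \<le> r"
    using \<open>i \<le> p\<close> \<open>j \<le> q\<close> assms(3) by linarith
  ultimately show ?thesis
    by (auto simp: ddist_le_enat_iff)
qed

lemma ddist_chain_le:
  assumes "\<And>s. t \<le> s \<Longrightarrow> s < u \<Longrightarrow> (f s, f (Suc s)) \<in> E" and "t \<le> u"
  shows "ddist E (f t) (f u) \<le> enat (u - t)"
  using assms
proof (induction u)
  case 0
  then show ?case by (simp add: ddist_self)
next
  case (Suc u)
  show ?case
  proof (cases "t = Suc u")
    case True
    then show ?thesis by (simp add: ddist_self)
  next
    case False
    with Suc have "ddist E (f t) (f u) \<le> enat (u - t)"
      by auto
    moreover have "ddist E (f u) (f (Suc u)) \<le> enat 1"
      using Suc.prems False by (intro ddist_arc) auto
    ultimately show ?thesis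
      by (rule ddist_trans_le) (use False Suc.prems(2) in simp)
  qed
qed

lemma ddist_antimono:
  assumes "E' \<subseteq> E"
  shows "ddist E u v \<le> ddist E' u v"
proof (cases "ddist E' u v")
  case (enat k)
  then obtain j where "j \<le> k" "(u, v) \<in> E' ^^ j"
    using ddist_le_enat_iff[of E' u v k] by auto
  then have "(u, v) \<in> E ^^ j"
    using relpowp_mono[to_set, of E' E] assms by blast
  with \<open>j \<le> k\<close> enat show ?thesis
    by (auto simp: ddist_le_enat_iff)
qed simp

lemma ddist_ge_potential:
  assumes "\<And>x y. (x, y) \<in> E \<Longrightarrow> \<phi> y \<le> \<phi> x + (1::nat)"
  shows "enat (\<phi> v - \<phi> u) \<le> ddist E u v"
proof -
  have walk: "\<phi> y \<le> \<phi> u + j" if "(u, y) \<in> E ^^ j" for j y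
    using that
  proof (induction j arbitrary: y)
    case (Suc j)
    then obtain x where "(u, x) \<in> E ^^ j" "(x, y) \<in> E" by auto
    with Suc.IH assms show ?case by fastforce
  qed simp
  show ?thesis
    unfolding enat_le_ddist_iff
  proof (intro allI impI notI)
    fix j assume "j < \<phi> v - \<phi> u" "(u, v) \<in> E ^^ j"
    with walk[OF this(2)] show False by linarith
  qed
qed

lemma relpow_map_prod_iff:
  assumes "inj f"
  shows "(f u, f v) \<in> (map_prod f f ` E) ^^ j \<longleftrightarrow> (u, v) \<in> E ^^ j"
proof (induction j arbitrary: v)
  case 0
  show ?case using assms by (simp add: inj_eq)
next
  case (Suc j)
  have "(f u, f v) \<in> (map_prod f f ` E) ^^ Suc j \<longleftrightarrow>
      (\<exists>w. (f u, f w) \<in> (map_prod f f ` E) ^^ j \<and> (f w, f v) \<in> map_prod f f ` E)"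
  proof
    assume "(f u, f v) \<in> (map_prod f f ` E) ^^ Suc j"
    then obtain x y where "(f u, x) \<in> (map_prod f f ` E) ^^ j" "(x, f v) \<in> map_prod f f ` E"
      by (rule relpow_Suc_E)
    moreover from this(2) obtain w where "x = f w" "(f w, f v) \<in> map_prod f f ` E"
      by force
    ultimately show "\<exists>w. (f u, f w) \<in> (map_prod f f ` E) ^^ j \<and> (f w, f v) \<in> map_prod f f ` E"
      by metis
  qed (elim exE conjE, rule relpow_Suc_I)
  also have "\<dots> \<longleftrightarrow> (u, v) \<in> E ^^ Suc j"
    using Suc.IH assms by (auto simp: inj_image_mem_iff inj_def)
  finally show ?case .
qed

lemma ddist_map_prod:
  "inj f \<Longrightarrow> ddist (map_prod f f ` E) (f u) (f v) = ddist E u v"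
  by (simp add: ddist_def relpow_map_prod_iff)

lemma ddist_le_diam: "u \<in> V \<Longrightarrow> v \<in> V \<Longrightarrow> ddist E u v \<le> diam V E"
  unfolding diam_def by (meson SUP_upper SUP_upper2)

lemma diam_leI: "(\<And>u v. u \<in> V \<Longrightarrow> v \<in> V \<Longrightarrow> ddist E u v \<le> x) \<Longrightarrow> diam V E \<le> x"
  unfolding diam_def by (simp add: SUP_least)

lemma diam_antimono: "E' \<subseteq> E \<Longrightarrow> diam V E \<le> diam V E'"
  by (meson diam_leI ddist_le_diam ddist_antimono order_trans)

lemma diam_map_prod: "inj f \<Longrightarrow> diam (f ` V) (map_prod f f ` E) = diam V E"
  by (simp add: diam_def ddist_map_prod image_image)

lemma diam_eqI:
  assumes "\<And>x y. x \<in> V \<Longrightarrow> y \<in> V \<Longrightarrow> ddist E x y \<le> enat D"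
    and "u \<in> V" "v \<in> V" "enat D \<le> ddist E u v"
  shows "diam V E = enat D"
  using assms by (meson antisym diam_leI ddist_le_diam order_trans)

lemma diam_complete_digraph:
  assumes "u \<in> V" "v \<in> V" "u \<noteq> v"
  shows "diam V {(x, y). x \<in> V \<and> y \<in> V \<and> x \<noteq> y} = enat 1"
proof (rule diam_eqI[OF _ assms(1,2)])
  fix x y assume "x \<in> V" "y \<in> V"
  then show "ddist {(x, y). x \<in> V \<and> y \<in> V \<and> x \<noteq> y} x y \<le> enat 1"
    using ddist_arc[of x y] by (cases "x = y") (auto simp: ddist_self)
qed (use assms(3) in \<open>simp add: enat_le_ddist_iff\<close>)

lemma diam_bidirected_star:
  assumes "c \<in> V" "u \<in> V" "v \<in> V" "u \<noteq> c" "v \<noteq> c" "u \<noteq> v"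
  shows "diam V ({c} \<times> (V - {c}) \<union> (V - {c}) \<times> {c}) = enat 2"
proof (rule diam_eqI[OF _ assms(2,3)])
  let ?E = "{c} \<times> (V - {c}) \<union> (V - {c}) \<times> {c}"
  fix x y assume xy: "x \<in> V" "y \<in> V"
  show "ddist ?E x y \<le> enat 2"
  proof (cases "x = y")
    case True
    then show ?thesis by (simp add: ddist_self)
  next
    case False
    show ?thesis
    proof (cases "x = c \<or> y = c")
      case True
      with False xy have "(x, y) \<in> ?E" by auto
      then show ?thesis by (rule order_trans[OF ddist_arc]) simp
    next
      case False
      with xy assms(1) have "ddist ?E x c \<le> enat 1" and "ddist ?E c y \<le> enat 1"
        by (intro ddist_arc; auto)+
      then show ?thesis
        by (rule ddist_trans_le) simp
    qed
  qed
next
  show "enat 2 \<le> ddist ({c} \<times> (V - {c}) \<union> (V - {c}) \<times> {c}) u v"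
    using assms(4-6) by (auto simp: enat_le_ddist_iff less_2_cases_iff)
qed

lemma exists_digraph_diam_le_2:
  fixes n D :: nat
  assumes "1 \<le> n" "1 \<le> D" "D \<le> 2"
  shows "\<exists>(V::nat set) E. digraph V E \<and> card V = n + 2 \<and> diam V E = enat D"
proof -
  have "D = 1 \<or> D = 2" using assms(2,3) by auto
  then show ?thesis
  proof
    assume "D = 1"
    then show ?thesis
      using diam_complete_digraph[of 0 "{0..n + 1}" 1]
      by (intro exI[of _ "{0..n + 1}"] exI[of _ "{(x, y). x \<in> {0..n + 1} \<and> y \<in> {0..n + 1} \<and> x \<noteq> y}"])
        (auto simp: digraph_def)
  next
    assume "D = 2"
    then show ?thesis
      using diam_bidirected_star[of 0 "{0..n + 1}" 1 2] assms(1)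
      by (intro exI[of _ "{0..n + 1}"] exI[of _ "{0} \<times> ({0..n + 1} - {0}) \<union> ({0..n + 1} - {0}) \<times> {0}"])
        (auto simp: digraph_def)
  qed
qed

lemma countable_digraph_to_nat:
  fixes V :: "'a::countable set"
  assumes "digraph V E"
  shows "\<exists>(V'::nat set) E'. digraph V' E' \<and> card V' = card V \<and> diam V' E' = diam V E \<and>
    (\<forall>F' \<subseteq> E'. \<exists>F \<subseteq> E. card F' = card F \<and> diam V' F' = diam V F)"
proof -
  let ?f = "map_prod to_nat to_nat :: 'a \<times> 'a \<Rightarrow> nat \<times> nat"
  have inj_f: "inj ?f"
    by (intro prod.inj_map inj_to_nat)
  have "\<exists>F \<subseteq> E. card F' = card F \<and> diam (to_nat ` V) F' = diam V F" if "F' \<subseteq> ?f ` E" for F'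
  proof -
    define F where "F = E \<inter> ?f -` F'"
    have "F' = ?f ` F"
      using that unfolding F_def by force
    moreover have "F \<subseteq> E"
      unfolding F_def by blast
    ultimately show ?thesis
      by (auto simp: card_image inj_on_subset[OF inj_f] diam_map_prod)
  qed
  with assms show ?thesis
    by (intro exI[of _ "to_nat ` V"] exI[of _ "?f ` E"])
      (auto simp: digraph_def card_image diam_map_prod)
qed

datatype vert = Src nat nat | Snk nat nat | Hub nat

instance vert :: countable
  by countable_datatype

locale hub_construction =
  fixes m a b :: nat
  assumes m_pos: "0 < m" and a_pos: "0 < a" and a_le_b: "a \<le> b" and b_le_Suc_a: "b \<le> a + 1"
begin

definition verts :: "vert set" where
  "verts = (\<lambda>(i, t). Src i t) ` ({..<m} \<times> {..a}) \<union> (\<lambda>(j, t). Snk j t) ` ({..<m} \<times> {..b})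
    \<union> Hub ` {..<a}"

definition arcs :: "(vert \<times> vert) set" where
  "arcs = {(Src i t, Src i (Suc t)) | i t. i < m \<and> t < a}
    \<union> {(Snk j t, Snk j (Suc t)) | j t. j < m \<and> t < b}
    \<union> {(Src i a, Snk j 0) | i j. i < m \<and> j < m}
    \<union> {(Src i a, Hub 0) | i. i < m}
    \<union> {(Snk j t, Hub 0) | j t. j < m \<and> t \<le> b}
    \<union> {(Hub k, Hub (Suc k)) | k. Suc k < a}
    \<union> {(Hub (a - 1), Src i t) | i t. i < m \<and> t \<le> a}
    \<union> {(Hub (a - 1), Snk j 0) | j. j < m}"

lemma mem_verts [simp]:
  "Src i t \<in> verts \<longleftrightarrow> i < m \<and> t \<le> a"
  "Snk j t \<in> verts \<longleftrightarrow> j < m \<and> t \<le> b"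
  "Hub k \<in> verts \<longleftrightarrow> k < a"
  by (auto simp: verts_def)

lemma finite_verts: "finite verts"
  by (simp add: verts_def)

lemma arcs_subset: "arcs \<subseteq> verts \<times> verts"
  using a_pos by (auto simp: arcs_def)

lemma finite_arcs: "finite arcs"
  using arcs_subset finite_verts by (meson finite_SigmaI finite_subset)

lemma digraph_hub_construction: "digraph verts arcs"
  by (simp add: digraph_def finite_verts arcs_subset)

lemma card_verts: "card verts = m * (a + 1) + m * (b + 1) + a"
proof -
  have "card ((\<lambda>(i, t). Src i t) ` ({..<m} \<times> {..a})) = m * (a + 1)"
    by (subst card_image) (auto simp: inj_on_def)
  moreover have "card ((\<lambda>(j, t). Snk j t) ` ({..<m} \<times> {..b})) = m * (b + 1)"
    by (subst card_image) (auto simp: inj_on_def)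
  moreover have "card (Hub ` {..<a}) = a"
    by (simp add: card_image inj_on_def)
  ultimately show ?thesis
    unfolding verts_def by (subst card_Un_disjoint, force, force, force)+ simp
qed

lemma ddist_Src_Src:
  "i < m \<Longrightarrow> t \<le> u \<Longrightarrow> u \<le> a \<Longrightarrow> ddist arcs (Src i t) (Src i u) \<le> enat (u - t)"
  by (rule ddist_chain_le) (auto simp: arcs_def)

lemma ddist_Snk_Snk:
  "j < m \<Longrightarrow> t \<le> u \<Longrightarrow> u \<le> b \<Longrightarrow> ddist arcs (Snk j t) (Snk j u) \<le> enat (u - t)"
  by (rule ddist_chain_le) (auto simp: arcs_def)

lemma ddist_Hub_Hub: "k \<le> l \<Longrightarrow> l < a \<Longrightarrow> ddist arcs (Hub k) (Hub l) \<le> enat (l - k)"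
  by (rule ddist_chain_le) (auto simp: arcs_def)

lemma ddist_Hub_Src:
  assumes "k < a" "i < m" "u \<le> a"
  shows "ddist arcs (Hub k) (Src i u) \<le> enat (a - k)"
proof (rule ddist_trans_le)
  show "ddist arcs (Hub k) (Hub (a - 1)) \<le> enat (a - 1 - k)"
    using assms by (intro ddist_Hub_Hub) auto
  show "ddist arcs (Hub (a - 1)) (Src i u) \<le> enat 1"
    using assms by (intro ddist_arc) (auto simp: arcs_def)
qed (use assms in simp)

lemma ddist_Hub_Snk:
  assumes "k < a" "j < m" "u \<le> b"
  shows "ddist arcs (Hub k) (Snk j u) \<le> enat (a - k + u)"
proof (rule ddist_trans_le)
  show "ddist arcs (Hub k) (Snk j 0) \<le> enat (a - 1 - k + 1)"
  proof (rule ddist_trans_le)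
    show "ddist arcs (Hub k) (Hub (a - 1)) \<le> enat (a - 1 - k)"
      using assms by (intro ddist_Hub_Hub) auto
    show "ddist arcs (Hub (a - 1)) (Snk j 0) \<le> enat 1"
      using assms by (intro ddist_arc) (auto simp: arcs_def)
  qed simp
  show "ddist arcs (Snk j 0) (Snk j u) \<le> enat (u - 0)"
    using assms by (intro ddist_Snk_Snk) auto
qed (use assms in simp)

lemma ddist_Src_end_le:
  assumes "i < m" "w \<in> verts"
  shows "ddist arcs (Src i a) w \<le> enat (b + 1)"
proof (cases w)
  case (Src i' u)
  have "ddist arcs (Src i a) (Hub 0) \<le> enat 1"
    using assms by (intro ddist_arc) (auto simp: arcs_def)
  moreover have "ddist arcs (Hub 0) (Src i' u) \<le> enat (a - 0)"
    using assms Src a_pos by (intro ddist_Hub_Src) auto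
  ultimately show ?thesis
    unfolding Src by (rule ddist_trans_le) (use a_le_b in simp)
next
  case (Snk j u)
  have "ddist arcs (Src i a) (Snk j 0) \<le> enat 1"
    using assms Snk by (intro ddist_arc) (auto simp: arcs_def)
  moreover have "ddist arcs (Snk j 0) (Snk j u) \<le> enat (u - 0)"
    using assms Snk by (intro ddist_Snk_Snk) auto
  ultimately show ?thesis
    unfolding Snk by (rule ddist_trans_le) (use assms Snk in simp)
next
  case (Hub k)
  have "ddist arcs (Src i a) (Hub 0) \<le> enat 1"
    using assms by (intro ddist_arc) (auto simp: arcs_def)
  moreover have "ddist arcs (Hub 0) (Hub k) \<le> enat (k - 0)"
    using assms Hub by (intro ddist_Hub_Hub) auto
  ultimately show ?thesis
    unfolding Hub by (rule ddist_trans_le) (use assms Hub a_le_b in simp)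
qed

lemma ddist_Hub_last_le:
  assumes "w \<in> verts"
  shows "ddist arcs (Hub (a - 1)) w \<le> enat (b + 1)"
proof (cases w)
  case (Src i u)
  have "ddist arcs (Hub (a - 1)) w \<le> enat 1"
    using assms Src by (intro ddist_arc) (auto simp: arcs_def)
  then show ?thesis
    by (rule order_trans) simp
next
  case (Snk j u)
  have "ddist arcs (Hub (a - 1)) (Snk j u) \<le> enat (a - (a - 1) + u)"
    using assms Snk a_pos by (intro ddist_Hub_Snk) auto
  then show ?thesis
    unfolding Snk by (rule order_trans) (use assms Snk a_pos in simp)
next
  case (Hub k)
  have "ddist arcs (Hub (a - 1)) (Snk 0 0) \<le> enat (a - (a - 1) + 0)"
    using m_pos a_pos by (intro ddist_Hub_Snk) auto
  moreover have "ddist arcs (Snk 0 0) (Hub 0) \<le> enat 1"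
    using m_pos by (intro ddist_arc) (auto simp: arcs_def)
  ultimately have "ddist arcs (Hub (a - 1)) (Hub 0) \<le> enat 2"
    by (rule ddist_trans_le) (use a_pos in simp)
  moreover have "ddist arcs (Hub 0) (Hub k) \<le> enat (k - 0)"
    using assms Hub by (intro ddist_Hub_Hub) auto
  ultimately show ?thesis
    unfolding Hub by (rule ddist_trans_le) (use assms Hub a_le_b in simp)
qed

lemma ddist_le_diameter:
  assumes "v \<in> verts" "w \<in> verts"
  shows "ddist arcs v w \<le> enat (a + b + 1)"
proof (cases v)
  case (Src i t)
  have "ddist arcs (Src i t) (Src i a) \<le> enat (a - t)"
    using assms Src by (intro ddist_Src_Src) auto
  moreover have "ddist arcs (Src i a) w \<le> enat (b + 1)"
    using assms Src by (intro ddist_Src_end_le) auto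
  ultimately show ?thesis
    unfolding Src by (rule ddist_trans_le) simp
next
  case (Snk j t)
  have "ddist arcs v (Hub 0) \<le> enat 1"
    using assms Snk by (intro ddist_arc) (auto simp: arcs_def)
  moreover have "ddist arcs (Hub 0) (Hub (a - 1)) \<le> enat (a - 1 - 0)"
    using a_pos by (intro ddist_Hub_Hub) auto
  ultimately have "ddist arcs v (Hub (a - 1)) \<le> enat a"
    by (rule ddist_trans_le) (use a_pos in simp)
  moreover have "ddist arcs (Hub (a - 1)) w \<le> enat (b + 1)"
    using assms(2) by (rule ddist_Hub_last_le)
  ultimately show ?thesis
    by (rule ddist_trans_le) simp
next
  case (Hub k)
  have "ddist arcs (Hub k) (Hub (a - 1)) \<le> enat (a - 1 - k)"
    using assms Hub by (intro ddist_Hub_Hub) auto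
  moreover have "ddist arcs (Hub (a - 1)) w \<le> enat (b + 1)"
    using assms(2) by (rule ddist_Hub_last_le)
  ultimately show ?thesis
    unfolding Hub by (rule ddist_trans_le) simp
qed

fun level :: "nat \<Rightarrow> nat set \<Rightarrow> vert \<Rightarrow> nat" where
  "level i0 J (Src i t) = (if i = i0 then t else 2 * a + 1)"
| "level i0 J (Snk j t) = (if j \<in> J then 2 * a + 1 else a + 1) + t"
| "level i0 J (Hub k) = a + 1 + k"

lemma level_arc:
  assumes "(x, y) \<in> arcs" "\<forall>j \<in> J. (x, y) \<noteq> (Src i0 a, Snk j 0)"
  shows "level i0 J y \<le> level i0 J x + 1"
  using assms a_pos unfolding arcs_def by (auto split: if_splits)

lemma level_le_ddist:
  assumes "F \<subseteq> arcs" "\<forall>j \<in> J. (Src i0 a, Snk j 0) \<notin> F"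
  shows "enat (level i0 J v) \<le> ddist F (Src i0 0) v"
proof -
  have "level i0 J y \<le> level i0 J x + 1" if "(x, y) \<in> F" for x y
    using assms that by (intro level_arc) auto
  from ddist_ge_potential[of F "level i0 J", OF this, of v "Src i0 0"] show ?thesis
    by simp
qed

lemma diam_hub_construction: "diam verts arcs = enat (a + b + 1)"
proof (rule diam_eqI[OF ddist_le_diameter])
  show "enat (a + b + 1) \<le> ddist arcs (Src 0 0) (Snk 0 b)"
    using level_le_ddist[of arcs "{}" 0 "Snk 0 b"] by simp
qed (use m_pos in auto)

lemma bipartite_arc_mem:
  assumes "E' \<subseteq> arcs" "diam verts E' = enat k" "2 * k + 2 < 3 * (a + b + 1)" "i < m" "j < m"
  shows "(Src i a, Snk j 0) \<in> E'"
proof (rule ccontr)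
  assume "(Src i a, Snk j 0) \<notin> E'"
  then have "enat (level i {j} (Snk j b)) \<le> ddist E' (Src i 0) (Snk j b)"
    using assms(1) by (intro level_le_ddist) auto
  also have "\<dots> \<le> diam verts E'"
    using assms(4,5) by (intro ddist_le_diam) auto
  finally have "2 * a + 1 + b \<le> k"
    using assms(2) by simp
  with assms(3) b_le_Suc_a show False
    by presburger
qed

lemma card_subgraph_ge:
  assumes "E' \<subseteq> arcs" "diam verts E' = enat k" "2 * k + 2 < 3 * (a + b + 1)"
  shows "m * m \<le> card E'"
proof -
  let ?B = "(\<lambda>(i, j). (Src i a, Snk j 0)) ` ({..<m} \<times> {..<m})"
  have "?B \<subseteq> E'"
    using bipartite_arc_mem[OF assms] by auto
  moreover have "card ?B = m * m"
    by (subst card_image) (auto simp: inj_on_def)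
  moreover have "finite E'"
    using assms(1) finite_arcs by (rule finite_subset)
  ultimately show ?thesis
    by (metis card_mono)
qed

end

lemma exists_hub_digraph:
  fixes n D :: nat
  assumes "3 \<le> D"
  defines "m \<equiv> n div (D + 1) + 1"
  shows "\<exists>(V::nat set) E. digraph V E \<and> n \<le> card V \<and> card V \<le> n + 2 * D + 1 \<and>
    diam V E = enat D \<and>
    (\<forall>E' \<subseteq> E. \<forall>k. diam V E' = enat k \<longrightarrow> 2 * k + 2 < 3 * D \<longrightarrow> m * m \<le> card E')"
proof -
  define a where "a = (D - 1) div 2"
  define b where "b = D - 1 - a"
  have D_eq: "D = a + b + 1"
    using assms(1) unfolding a_def b_def by auto
  interpret hub_construction m a b
    using assms(1) unfolding m_def a_def b_def by unfold_locales auto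
  obtain V :: "nat set" and E where G: "digraph V E" "card V = card verts" "diam V E = diam verts arcs"
    and sub: "\<forall>E' \<subseteq> E. \<exists>F \<subseteq> arcs. card E' = card F \<and> diam V E' = diam verts F"
    using countable_digraph_to_nat[OF digraph_hub_construction] by blast
  have card_eq: "card V = m * (D + 1) + a"
    using G(2) card_verts D_eq by (simp add: algebra_simps)
  have "n < m * (D + 1)"
    using dividend_less_div_times[of "D + 1" n] by (simp add: m_def)
  moreover have "m * (D + 1) \<le> n + D + 1"
    using div_times_less_eq_dividend[of n "D + 1"] by (simp add: m_def)
  moreover have "a \<le> D"
    unfolding a_def by simp
  ultimately have "n \<le> card V" "card V \<le> n + 2 * D + 1"
    using card_eq by linarith+
  moreover have "diam V E = enat D"
    using G(3) diam_hub_construction D_eq by simp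
  moreover have "m * m \<le> card E'"
    if E': "E' \<subseteq> E" "diam V E' = enat k" "2 * k + 2 < 3 * D" for E' k
  proof -
    obtain F where "F \<subseteq> arcs" "card E' = card F" "diam verts F = enat k"
      using sub E'(1,2) by auto
    with E'(3) D_eq show ?thesis
      using card_subgraph_ge by simp
  qed
  ultimately show ?thesis
    using G(1) by blast
qed

lemma powr_three_halves_le_square:
  fixes n D m :: nat
  assumes "1 \<le> n" "1 \<le> D" "real D \<le> real n powr (1/4)" "n \<le> m * (D + 1)"
  shows "real n powr (3/2) \<le> 4 * real (m * m)"
proof -
  define s where "s = real n powr (1/4)"
  have s_pos: "s > 0" and s4: "s ^ 4 = real n" and s6: "s ^ 6 = real n powr (3/2)"
    using assms(1) by (simp_all add: s_def powr_power)
  have "real n \<le> real m * real (D + 1)"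
    using assms(4) by (metis of_nat_mono of_nat_mult)
  also have "\<dots> \<le> real m * (2 * s)"
    using assms(2,3) unfolding s_def by (intro mult_left_mono) auto
  finally have "s * s ^ 3 \<le> s * (2 * real m)"
    using s4 by (simp add: eval_nat_numeral algebra_simps)
  then have "s ^ 3 \<le> 2 * real m"
    using s_pos by simp
  then have "(s ^ 3)\<^sup>2 \<le> (2 * real m)\<^sup>2"
    using s_pos by (intro power_mono) auto
  then show ?thesis
    using s6 by (simp add: power2_eq_square flip: power_mult)
qed

lemma exists_hard_digraph:
  fixes n D :: nat
  assumes n: "1 \<le> n" and D: "1 \<le> D" "real D \<le> real n powr (1/4)"
  shows "\<exists>(V::nat set) E. digraph V E \<and> real n \<le> real (card V) \<and> real (card V) \<le> 4 * real n \<and>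
    diam V E = enat D \<and>
    (\<forall>E' \<subseteq> E. (\<exists>k. diam V E' = enat k \<and> real k < 3/2 * real D - 1) \<longrightarrow>
      1/4 * real n powr (3/2) \<le> real (card E'))"
proof (cases "D \<le> 2")
  case True
  then obtain V :: "nat set" and E where G: "digraph V E" "card V = n + 2" "diam V E = enat D"
    using exists_digraph_diam_le_2 n D(1) by blast
  have "\<not> real k < 3/2 * real D - 1" if "E' \<subseteq> E" "diam V E' = enat k" for E' k
  proof -
    have "D \<le> k"
      using diam_antimono[OF that(1), of V] G(3) that(2) by simp
    with True show ?thesis
      by simp
  qed
  then show ?thesis
    using G n by (intro exI[of _ V] exI[of _ E]) auto
next
  case False
  define m where "m = n div (D + 1) + 1"
  obtain V :: "nat set" and E where G: "digraph V E" "n \<le> card V" "card V \<le> n + 2 * D + 1"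
    "diam V E = enat D"
    and sparse: "\<And>E' k. E' \<subseteq> E \<Longrightarrow> diam V E' = enat k \<Longrightarrow> 2 * k + 2 < 3 * D \<Longrightarrow> m * m \<le> card E'"
    using exists_hub_digraph[of D n] False unfolding m_def by auto
  have "real D \<le> real n"
    using D(2) powr_mono[of "1/4" 1 "real n"] n by simp
  then have "real (card V) \<le> 4 * real n"
    using G(3) n by linarith
  moreover have "1/4 * real n powr (3/2) \<le> real (card E')"
    if "E' \<subseteq> E" "diam V E' = enat k" "real k < 3/2 * real D - 1" for E' k
  proof -
    have "n \<le> m * (D + 1)"
      using dividend_less_div_times[of "D + 1" n] by (simp add: m_def)
    then have "real n powr (3/2) \<le> 4 * real (m * m)"
      by (rule powr_three_halves_le_square[OF n D])
    moreover have "real (m * m) \<le> real (card E')"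
      using that by (intro of_nat_mono sparse) auto
    ultimately show ?thesis
      by linarith
  qed
  ultimately show ?thesis
    using G by (intro exI[of _ V] exI[of _ E]) auto
qed

theorem theorem1p1:
  shows "\<exists>c1 c2 c3 :: real. c1 > 0 \<and> c2 > 0 \<and> c3 > 0 \<and>
    (\<forall>(n::nat) (D::nat). n \<ge> 1 \<longrightarrow> D \<ge> 1 \<longrightarrow> real D \<le> real n powr (1/4) \<longrightarrow>
      (\<exists>(V::nat set) E. digraph V E \<and>
         c1 * real n \<le> real (card V) \<and> real (card V) \<le> c2 * real n \<and>
         diam V E = enat D \<and>
         (\<forall>E'. E' \<subseteq> E \<longrightarrow>
            (\<exists>k. diam V E' = enat k \<and> real k < 3/2 * real D - 1) \<longrightarrow>
            real (card E') \<ge> c3 * real n powr (3/2))))"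
  using exists_hard_digraph by (intro exI[of _ 1] exI[of _ 4] exI[of _ "1/4"]) auto

end
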